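(* Let $n\ge3$ and let $f$ be a $\gamma_{tr3}(P_3\square P_n)$-function such that the number of vertices $v$ with $f(v)=\emptyset$ is minimum among all $\gamma_{tr3}(P_3\square P_n)$-functions. Then $|f((i,j))|\le2$ for all $i\in\{0,1\}$ and $j\in\{0,1,\dots,n-1\}$.
   Context: $P_m$ denotes the directed path with vertex set $\{0,1,\dots,m-1\}$ and arcs $(i,i+1)$ for $0\le i\le m-2$. The Cartesian product $D_1\square D_2$ has vertex set $V(D_1)\times V(D_2)$, with an arc from $(x_1,y_1)$ to $(x_2,y_2)$ iff either $(x_1,x_2)$ is an arc of $D_1$ and $y_1=y_2$, or $x_1=x_2$ and $(y_1,y_2)$ is an arc of $D_2$. For a digraph $D$ and positive integer $k$, a $k$-rainbow dominating function on $D$ is $f:V(D)\to\mathcal P(\{1,\dots,k\})$ such that every $v$ with $f(v)=\emptyset$ satisfies $\bigcup_{u\in N^-(v)}f(u)=\{1,\dots,k\}$, where $N^-(v)$ is the set of in-neighbors of $v$; its weight is $\sum_v|f(v)|$. It is total if additionally the subdigraph induced by $\{v:f(v)\ne\emptyset\}$ has no isolated vertex (a vertex with neither in- nor out-neighbors in it). $\gamma_{trk}(D)$ is the minimum weight of a total $k$-rainbow dominating function, and a $\gamma_{trk}(D)$-function is one attaining it. *)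

theory Defs
  imports Main
begin

type_synonym 'a digraph = "'a set \<times> ('a \<times> 'a) set"

definition verts :: "'a digraph \<Rightarrow> 'a set" where "verts D = fst D"
definition arcs :: "'a digraph \<Rightarrow> ('a \<times> 'a) set" where "arcs D = snd D"

definition path_digraph :: "nat \<Rightarrow> nat digraph" where
  "path_digraph m = ({0..<m}, {(i, i + 1) | i. i + 1 < m})"

definition cart_prod :: "'a digraph \<Rightarrow> 'b digraph \<Rightarrow> ('a \<times> 'b) digraph" where
  "cart_prod D1 D2 = (verts D1 \<times> verts D2,
     {((x1, y1), (x2, y2)) | x1 y1 x2 y2.
        x1 \<in> verts D1 \<and> x2 \<in> verts D1 \<and> y1 \<in> verts D2 \<and> y2 \<in> verts D2 \<and>
        (((x1, x2) \<in> arcs D1 \<and> y1 = y2) \<or> (x1 = x2 \<and> (y1, y2) \<in> arcs D2))})"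

definition in_nbrs :: "'a digraph \<Rightarrow> 'a \<Rightarrow> 'a set" where
  "in_nbrs D v = {u \<in> verts D. (u, v) \<in> arcs D}"

definition rainbow_dom :: "'a digraph \<Rightarrow> nat \<Rightarrow> ('a \<Rightarrow> nat set) \<Rightarrow> bool" where
  "rainbow_dom D k f \<longleftrightarrow>
     (\<forall>v \<in> verts D. f v \<subseteq> {1..k}) \<and>
     (\<forall>v \<in> verts D. f v = {} \<longrightarrow> (\<Union>u \<in> in_nbrs D v. f u) = {1..k})"

definition total_rainbow_dom :: "'a digraph \<Rightarrow> nat \<Rightarrow> ('a \<Rightarrow> nat set) \<Rightarrow> bool" where
  "total_rainbow_dom D k f \<longleftrightarrow> rainbow_dom D k f \<and>
     (\<forall>v \<in> verts D. f v \<noteq> {} \<longrightarrow>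
        (\<exists>u \<in> verts D. f u \<noteq> {} \<and> ((u, v) \<in> arcs D \<or> (v, u) \<in> arcs D)))"

definition rd_weight :: "'a digraph \<Rightarrow> ('a \<Rightarrow> nat set) \<Rightarrow> nat" where
  "rd_weight D f = (\<Sum>v \<in> verts D. card (f v))"

definition gamma_trk :: "'a digraph \<Rightarrow> nat \<Rightarrow> nat" where
  "gamma_trk D k = Inf {rd_weight D f | f. total_rainbow_dom D k f}"

definition gamma_trk_function :: "'a digraph \<Rightarrow> nat \<Rightarrow> ('a \<Rightarrow> nat set) \<Rightarrow> bool" where
  "gamma_trk_function D k f \<longleftrightarrow> total_rainbow_dom D k f \<and> rd_weight D f = gamma_trk D k"

definition empty_count :: "'a digraph \<Rightarrow> ('a \<Rightarrow> nat set) \<Rightarrow> nat" where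
  "empty_count D f = card {v \<in> verts D. f v = {}}"

end

theory Submission
  imports Defs
begin

text \<open>Relabel a total k-rainbow dominating function f (k \<ge> 2) at a vertex v with f v \<noteq> {}:
  v gets {1} and each of its e empty out-neighbours gets {2}. No vertex that stays empty has v as
  an in-neighbour, all other labels only grow, and v and its new non-empty out-neighbours cover
  each other against isolation. The weight changes by 1 + e - |f v|, so if f is a minimum-weight
  function with the fewest empty vertices, then |f v| \<le> max 1 e: otherwise the relabelling is
  lighter, or equally heavy with e fewer empty vertices. In the grid every out-degree is at most 2.\<close>

definition empty_out_nbrs :: "'a digraph \<Rightarrow> ('a \<Rightarrow> nat set) \<Rightarrow> 'a \<Rightarrow> 'a set" where
  "empty_out_nbrs D f v = {w \<in> verts D. (v, w) \<in> arcs D \<and> f w = {}}"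

definition spread_label :: "'a digraph \<Rightarrow> ('a \<Rightarrow> nat set) \<Rightarrow> 'a \<Rightarrow> 'a \<Rightarrow> nat set" where
  "spread_label D f v =
     (\<lambda>u. if u = v then {1} else if u \<in> empty_out_nbrs D f v then {2} else f u)"

lemma gamma_trk_le_rd_weight:
  assumes "total_rainbow_dom D k g"
  shows "gamma_trk D k \<le> rd_weight D g"
  unfolding gamma_trk_def using assms by (auto intro: cInf_lower)

lemma total_rainbow_dom_spread_label:
  assumes tf: "total_rainbow_dom D k f" and k: "k \<ge> 2"
    and v: "v \<in> verts D" and fv: "f v \<noteq> {}"
  shows "total_rainbow_dom D k (spread_label D f v)"
proof -
  let ?O = "empty_out_nbrs D f v" and ?g = "spread_label D f v"
  have fsub: "\<And>u. u \<in> verts D \<Longrightarrow> f u \<subseteq> {1..k}"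
    and fcov: "\<And>u. u \<in> verts D \<Longrightarrow> f u = {} \<Longrightarrow> (\<Union>w \<in> in_nbrs D u. f w) = {1..k}"
    and ftot: "\<And>u. u \<in> verts D \<Longrightarrow> f u \<noteq> {} \<Longrightarrow>
        \<exists>w \<in> verts D. f w \<noteq> {} \<and> ((w, u) \<in> arcs D \<or> (u, w) \<in> arcs D)"
    using tf by (auto simp: total_rainbow_dom_def rainbow_dom_def)
  have gsub: "?g u \<subseteq> {1..k}" if "u \<in> verts D" for u
    using fsub[OF that] k by (auto simp: spread_label_def)
  have gsup: "f u \<subseteq> ?g u" if "u \<noteq> v" for u
    using that by (auto simp: spread_label_def empty_out_nbrs_def)
  have gne: "?g u \<noteq> {}" if "f u \<noteq> {}" for u
    using that by (auto simp: spread_label_def)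
  show ?thesis
    unfolding total_rainbow_dom_def rainbow_dom_def
  proof (intro conjI ballI impI)
    fix u assume "u \<in> verts D" then show "?g u \<subseteq> {1..k}" by (rule gsub)
  next
    fix u assume u: "u \<in> verts D" and gu: "?g u = {}"
    then have fu: "f u = {}" and "u \<notin> ?O"
      by (auto simp: spread_label_def split: if_splits)
    with u have "v \<notin> in_nbrs D u" by (auto simp: empty_out_nbrs_def in_nbrs_def)
    then have "(\<Union>w \<in> in_nbrs D u. f w) \<subseteq> (\<Union>w \<in> in_nbrs D u. ?g w)"
      using gsup by (intro UN_mono subset_refl) metis
    moreover have "(\<Union>w \<in> in_nbrs D u. ?g w) \<subseteq> {1..k}"
      using gsub by (auto simp: in_nbrs_def)
    ultimately show "(\<Union>w \<in> in_nbrs D u. ?g w) = {1..k}"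
      using fcov[OF u fu] by (metis subset_antisym)
  next
    fix u assume u: "u \<in> verts D" and gu: "?g u \<noteq> {}"
    show "\<exists>w \<in> verts D. ?g w \<noteq> {} \<and> ((w, u) \<in> arcs D \<or> (u, w) \<in> arcs D)"
    proof (cases "f u = {}")
      case True
      with gu fv have "u \<in> ?O" by (auto simp: spread_label_def split: if_splits)
      then show ?thesis using v by (auto simp: empty_out_nbrs_def spread_label_def)
    next
      case False
      then show ?thesis using ftot[OF u] gne by blast
    qed
  qed
qed

lemma rd_weight_spread_label:
  assumes fin: "finite (verts D)" and v: "v \<in> verts D" and fv: "f v \<noteq> {}"
  shows "rd_weight D (spread_label D f v) + card (f v)
           = rd_weight D f + 1 + card (empty_out_nbrs D f v)"
proof -
  let ?O = "empty_out_nbrs D f v" and ?g = "spread_label D f v"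
  have O: "?O \<subseteq> verts D" "v \<notin> ?O" using fv by (auto simp: empty_out_nbrs_def)
  have "card (?g u) + (if u = v then card (f v) else 0)
          = card (f u) + (if u = v then 1 else 0) + (if u \<in> ?O then 1 else 0)" for u
    using O by (auto simp: spread_label_def empty_out_nbrs_def)
  then have "(\<Sum>u\<in>verts D. card (?g u) + (if u = v then card (f v) else 0))
      = (\<Sum>u\<in>verts D. card (f u) + (if u = v then 1 else 0) + (if u \<in> ?O then 1 else 0))"
    by simp
  then have "(\<Sum>u\<in>verts D. card (?g u)) + card (f v)
           = (\<Sum>u\<in>verts D. card (f u)) + 1 + (\<Sum>u\<in>verts D. if u \<in> ?O then 1 else 0)"
    using fin v by (simp add: sum.distrib)
  moreover have "(\<Sum>u\<in>verts D. if u \<in> ?O then 1 else 0::nat) = card ?O"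
    using fin O(1) by (simp add: sum.If_cases Int_absorb1 Int_absorb2)
  ultimately show ?thesis by (simp add: rd_weight_def)
qed

lemma empty_count_spread_label:
  assumes fin: "finite (verts D)" and fv: "f v \<noteq> {}"
  shows "empty_count D (spread_label D f v) = empty_count D f - card (empty_out_nbrs D f v)"
proof -
  let ?E = "{u \<in> verts D. f u = {}}" and ?O = "empty_out_nbrs D f v"
  have "{u \<in> verts D. spread_label D f v u = {}} = ?E - ?O"
    using fv by (auto simp: spread_label_def empty_out_nbrs_def)
  moreover have "?O \<subseteq> ?E" by (auto simp: empty_out_nbrs_def)
  ultimately show ?thesis
    using fin by (simp add: empty_count_def card_Diff_subset finite_subset)
qed

lemma card_label_le_empty_out_nbrs:
  assumes fin: "finite (verts D)" and k: "k \<ge> 2"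
    and gf: "gamma_trk_function D k f"
    and min: "\<forall>g. gamma_trk_function D k g \<longrightarrow> empty_count D f \<le> empty_count D g"
    and v: "v \<in> verts D"
  shows "card (f v) \<le> max 1 (card (empty_out_nbrs D f v))"
proof (cases "f v = {}")
  case False
  let ?O = "empty_out_nbrs D f v" and ?g = "spread_label D f v"
  have tg: "total_rainbow_dom D k ?g"
    using gf k v False by (auto intro: total_rainbow_dom_spread_label simp: gamma_trk_function_def)
  have wf: "rd_weight D f = gamma_trk D k" using gf by (simp add: gamma_trk_function_def)
  have W: "rd_weight D ?g + card (f v) = rd_weight D f + 1 + card ?O"
    using fin v False by (rule rd_weight_spread_label)
  have le: "rd_weight D f \<le> rd_weight D ?g"
    using gamma_trk_le_rd_weight[OF tg] wf by simp
  have "\<not> (card (f v) = card ?O + 1 \<and> ?O \<noteq> {})"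
  proof
    assume eq: "card (f v) = card ?O + 1 \<and> ?O \<noteq> {}"
    then have "gamma_trk_function D k ?g"
      using tg W wf by (simp add: gamma_trk_function_def)
    then have "empty_count D f \<le> empty_count D ?g"
      using min by blast
    also have "\<dots> = empty_count D f - card ?O"
      using fin False by (rule empty_count_spread_label)
    finally have "empty_count D f \<le> empty_count D f - card ?O" .
    moreover have "card ?O \<le> empty_count D f"
      unfolding empty_count_def empty_out_nbrs_def
      using fin by (intro card_mono) auto
    moreover have "card ?O > 0"
      using eq fin by (simp add: card_gt_0_iff empty_out_nbrs_def)
    ultimately show False by linarith
  qed
  then show ?thesis using W le by (cases "?O = {}") auto
qed simp

lemma arc_grid_from:
  assumes "((i, j), w) \<in> arcs (cart_prod (path_digraph m) (path_digraph n))"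
  shows "w \<in> {(i + 1, j), (i, j + 1)}"
  using assms by (auto simp: cart_prod_def arcs_def verts_def path_digraph_def)

theorem lemma4p8:
  fixes n :: nat and f :: "nat \<times> nat \<Rightarrow> nat set"
  defines "D \<equiv> cart_prod (path_digraph 3) (path_digraph n)"
  assumes "n \<ge> 3"
    and "gamma_trk_function D 3 f"
    and "\<forall>g. gamma_trk_function D 3 g \<longrightarrow> empty_count D f \<le> empty_count D g"
  shows "\<forall>i \<in> {0, 1}. \<forall>j \<in> {0..<n}. card (f (i, j)) \<le> 2"
proof (intro ballI)
  fix i j assume "i \<in> {0::nat, 1}" and "j \<in> {0..<n}"
  have VD: "verts D = {0..<3} \<times> {0..<n}"
    by (simp add: D_def cart_prod_def verts_def path_digraph_def)
  have "empty_out_nbrs D f (i, j) \<subseteq> {(i + 1, j), (i, j + 1)}"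
    using arc_grid_from unfolding D_def empty_out_nbrs_def by blast
  then have "card (empty_out_nbrs D f (i, j)) \<le> card {(i + 1, j), (i, j + 1)}"
    by (intro card_mono) auto
  also have "\<dots> \<le> 2" by (simp add: card_insert_le_m1)
  finally have "card (empty_out_nbrs D f (i, j)) \<le> 2" .
  moreover have "card (f (i, j)) \<le> max 1 (card (empty_out_nbrs D f (i, j)))"
  proof (rule card_label_le_empty_out_nbrs[OF _ _ assms(3,4)])
    show "finite (verts D)" "(i, j) \<in> verts D"
      using VD \<open>i \<in> {0, 1}\<close> \<open>j \<in> {0..<n}\<close> by auto
  qed simp
  ultimately show "card (f (i, j)) \<le> 2" by linarith
qed

end
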